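(* Let $K\subset\mathbb{R}^m$ be a pointed, closed, convex cone with nonempty interior which is finitely generated, let $C\subset\mathbb{R}^m$ be a finite set with $0\notin C$ and $K^*=\operatorname{cone}(\operatorname{conv}(C))$, and let $F:\mathbb{R}^n\to\mathbb{R}^m$ be continuously differentiable. Define $h(x,d)=\max\{\langle JF(x)d,w\rangle : w\in C\}$ and $v(x)=\arg\min_{d}\{h(x,d)+\tfrac12\|d\|^2\}$. Fix $0<\rho<1$, $0<\delta<1$, $\mu>2$, and $e\in\operatorname{int}(K)$ with $\langle w,e\rangle\le1$ for all $w\in C$. Let $x^0\in\mathbb{R}^n$ and assume: (A1) there is an open set $\Lambda$ containing $\mathcal{L}=\{x: F(x)\preceq_K F(x^0)\}$ such that $\|JF(x)-JF(y)\|\le L\|x-y\|$ for all $x,y\in\Lambda$; (A2) every sequence $\{D_k\}\subset F(\mathcal{L})$ with $D_{k+1}\preceq_K D_k$ for all $k$ admits $D\in\mathbb{R}^m$ with $D\preceq_K D_k$ for all $k$. Let $\{x^k\}$ be an infinite sequence generated as follows: $d^0=v(x^0)$; for $k\ge1$, $d^k=v(x^k)+\beta_k d^{k-1}$ with $$\beta_k=\frac{-h(x^k,v(x^k))\big(|h(x^{k-1},v(x^k))|+h(x^{k-1},v(x^k))\big)}{\max\big\{\mu|h(x^k,d^{k-1})h(x^{k-1},v(x^k))|,\ -\mu h(x^{k-1},v(x^{k-1}))|h(x^{k-1},v(x^k))|\big\}};$$ $x^{k+1}=x^k+\alpha_kd^k$, where, with $\tau_k=-h(x^k,d^k)/\|d^k\|^2$,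 $\alpha_k$ is the largest element of $\{\tau_k,\delta\tau_k,\delta^2\tau_k,\dots\}$ satisfying the Armijo condition $$F(x^k+\alpha_kd^k)\preceq_K F(x^k)+\rho\alpha_k h(x^k,d^k)e.$$ Then $\liminf_{k\to\infty}\|v(x^k)\|=0$.
   Context: $u\preceq_K v$ means $v-u\in K$. $K^*$ is the positive polar cone of $K$ and $JF$ the Jacobian of $F$. The sequence is assumed infinite, i.e. $v(x^k)\neq0$ for all $k$; $v(x)=0$ iff $x$ is a $K$-Pareto critical point, i.e. $\operatorname{Im}(JF(x))\cap(-\operatorname{int}K)=\emptyset$. *)

theory Defs
  imports "HOL-Analysis.Analysis"
begin

definition cone_le :: "'b::real_vector set \<Rightarrow> 'b \<Rightarrow> 'b \<Rightarrow> bool" where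
  "cone_le K u v \<longleftrightarrow> v - u \<in> K"

definition pos_polar :: "'b::real_inner set \<Rightarrow> 'b set" where
  "pos_polar K = {w. \<forall>y\<in>K. inner w y \<ge> 0}"

definition pointed :: "'b::real_vector set \<Rightarrow> bool" where
  "pointed K \<longleftrightarrow> (\<forall>y. y \<in> K \<and> - y \<in> K \<longrightarrow> y = 0)"

definition finitely_generated_cone :: "'b::real_vector set \<Rightarrow> bool" where
  "finitely_generated_cone K \<longleftrightarrow> (\<exists>G. finite G \<and> K = cone hull (convex hull G))"

definition hfun :: "('a::euclidean_space \<Rightarrow> 'a \<Rightarrow>\<^sub>L 'b::euclidean_space) \<Rightarrow> 'b set \<Rightarrow> 'a \<Rightarrow> 'a \<Rightarrow> real" where
  "hfun J C x d = Max ((\<lambda>w. inner (blinfun_apply (J x) d) w) ` C)"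

text \<open>v(x) = argmin_d { h(x,d) + 1/2 ||d||^2 } (the minimiser is unique by strong convexity).\<close>
definition vfun :: "('a::euclidean_space \<Rightarrow> 'a \<Rightarrow>\<^sub>L 'b::euclidean_space) \<Rightarrow> 'b set \<Rightarrow> 'a \<Rightarrow> 'a" where
  "vfun J C x = (THE d. \<forall>d'. hfun J C x d + (norm d)\<^sup>2 / 2 \<le> hfun J C x d' + (norm d')\<^sup>2 / 2)"

end

theory Submission
  imports Defs
begin

(* Since K is closed and K* is generated by C, u \<preceq>_K w iff <c,u> \<le> <c,w> for all c \<in> C, which
   turns every statement about the cone order into finitely many scalar inequalities.
   Optimality of v(x) along its own ray gives h(x,v(x)) = -\<parallel>v(x)\<parallel>^2, and the choice of \<beta>_k bounds
   both \<beta>_k \<parallel>v_(k-1)\<parallel>^2 and \<beta>_k |h(x_k,d_(k-1))| by (2/\<mu>) \<parallel>v_k\<parallel>^2; hence the sufficient descent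
   condition h(x_k,d_k) \<le> -(1 - 2/\<mu>) \<parallel>v_k\<parallel>^2.
   By the Armijo rule and (A2) the decreases \<alpha>_k (-h(x_k,d_k)) are summable, and a rejected trial
   step together with the Lipschitz bound (A1) forces \<alpha>_k \<ge> const (-h(x_k,d_k)) / \<parallel>d_k\<parallel>^2, so
   h(x_k,d_k)^2 / \<parallel>d_k\<parallel>^2 \<rightarrow> 0 (a Zoutendijk condition). If \<parallel>v_k\<parallel> \<ge> \<gamma> > 0 eventually, the recurrence
   \<parallel>d_k\<parallel>/\<parallel>v_k\<parallel>^2 \<le> 1/\<parallel>v_k\<parallel> + (2/\<mu>) \<parallel>d_(k-1)\<parallel>/\<parallel>v_(k-1)\<parallel>^2 keeps \<parallel>d_k\<parallel>/\<parallel>v_k\<parallel>^2 bounded, and then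
   sufficient descent keeps h(x_k,d_k)^2 / \<parallel>d_k\<parallel>^2 away from 0, a contradiction. *)

lemma pos_polar_separation:
  fixes K :: "'b::euclidean_space set"
  assumes "convex_cone K" "closed K" "y \<notin> K"
  obtains a where "a \<in> pos_polar K" "inner a y < 0"
proof -
  have "convex K"
    using assms(1) by (simp add: convex_cone_def)
  then obtain a b where ab: "inner a y < b" "\<forall>z\<in>K. b < inner a z"
    using separating_hyperplane_closed_point[OF _ assms(2,3)] by blast
  have "0 \<in> K"
    using assms(1) unfolding convex_cone_def conic_def by (metis all_not_in_conv scale_zero_left order_refl)
  with ab(2) have "b < 0" by force
  have "0 \<le> inner a z" if "z \<in> K" for z
  proof (rule ccontr)
    assume neg: "\<not> 0 \<le> inner a z"
    \<comment> \<open>a nonnegative multiple of z would lie on the separating hyperplane\<close>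
    have "(b / inner a z) *\<^sub>R z \<in> K"
      using assms(1) that \<open>b < 0\<close> neg by (simp add: convex_cone_def conic_def divide_nonpos_neg)
    with ab(2) neg show False by force
  qed
  then have "a \<in> pos_polar K"
    by (simp add: pos_polar_def)
  with that ab(1) \<open>b < 0\<close> show thesis by force
qed

lemma mem_cone_iff_inner_nonneg:
  fixes K C :: "'b::euclidean_space set"
  assumes "convex_cone K" "closed K" "pos_polar K = cone hull (convex hull C)"
  shows "y \<in> K \<longleftrightarrow> (\<forall>c\<in>C. 0 \<le> inner c y)"
proof
  assume "y \<in> K"
  moreover have "C \<subseteq> pos_polar K"
    using assms(3) by (metis hull_subset subset_trans)
  ultimately show "\<forall>c\<in>C. 0 \<le> inner c y"
    by (auto simp: pos_polar_def)
next
  assume C_nonneg: "\<forall>c\<in>C. 0 \<le> inner c y"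
  have "cone hull (convex hull C) \<subseteq> {a. 0 \<le> inner a y}"
  proof (rule hull_minimal)
    show "convex hull C \<subseteq> {a. 0 \<le> inner a y}"
      by (rule hull_minimal) (use C_nonneg convex_halfspace_ge[of 0 y] in \<open>auto simp: inner_commute\<close>)
    show "cone {a. 0 \<le> inner a y}"
      by (auto simp: cone_def)
  qed
  then show "y \<in> K"
    using pos_polar_separation[OF assms(1,2)] assms(3) by (metis mem_Collect_eq not_le subsetD)
qed

lemma cone_le_iff_inner_le:
  fixes K C :: "'b::euclidean_space set"
  assumes "convex_cone K" "closed K" "pos_polar K = cone hull (convex hull C)"
  shows "cone_le K u v \<longleftrightarrow> (\<forall>c\<in>C. inner c u \<le> inner c v)"
  unfolding cone_le_def mem_cone_iff_inner_nonneg[OF assms] by (simp add: inner_diff_right)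

lemma pos_polar_inner_pos_interior:
  fixes K :: "'b::real_inner set"
  assumes "c \<in> pos_polar K" "c \<noteq> 0" "e \<in> interior K"
  shows "0 < inner c e"
proof -
  obtain \<epsilon> where "\<epsilon> > 0" "ball e \<epsilon> \<subseteq> K"
    using assms(3) mem_interior by blast
  define s where "s = \<epsilon> / (2 * norm c)"
  have "s > 0"
    using \<open>\<epsilon> > 0\<close> assms(2) by (simp add: s_def)
  have "dist e (e - s *\<^sub>R c) < \<epsilon>"
    using \<open>\<epsilon> > 0\<close> assms(2) by (simp add: s_def dist_norm)
  then have "e - s *\<^sub>R c \<in> K"
    using \<open>ball e \<epsilon> \<subseteq> K\<close> by auto
  then have "0 \<le> inner c (e - s *\<^sub>R c)"
    using assms(1) by (simp add: pos_polar_def)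
  then have "s * (norm c)\<^sup>2 \<le> inner c e"
    by (simp add: inner_diff_right power2_norm_eq_inner)
  moreover have "0 < s * (norm c)\<^sup>2"
    using \<open>s > 0\<close> assms(2) by simp
  ultimately show ?thesis by linarith
qed

definition vfun_objective :: "('a::euclidean_space \<Rightarrow> 'a \<Rightarrow>\<^sub>L 'b::euclidean_space) \<Rightarrow> 'b set \<Rightarrow> 'a \<Rightarrow> 'a \<Rightarrow> real" where
  "vfun_objective J C x d = hfun J C x d + (norm d)\<^sup>2 / 2"

context
  fixes J :: "'a::euclidean_space \<Rightarrow> 'a \<Rightarrow>\<^sub>L 'b::euclidean_space" and C :: "'b set" and x :: 'a
  assumes C_fin: "finite C" and C_ne: "C \<noteq> {}"
begin

lemma inner_le_hfun: "c \<in> C \<Longrightarrow> inner (J x d) c \<le> hfun J C x d"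
  unfolding hfun_def using C_fin by (intro Max_ge) auto

lemma hfun_attained: obtains c where "c \<in> C" "hfun J C x d = inner (J x d) c"
proof -
  have "hfun J C x d \<in> (\<lambda>w. inner (J x d) w) ` C"
    unfolding hfun_def using C_fin C_ne by (intro Max_in) auto
  with that show thesis by blast
qed

lemma hfun_add_le: "hfun J C x (a + b) \<le> hfun J C x a + hfun J C x b"
proof -
  obtain c where "c \<in> C" "hfun J C x (a + b) = inner (J x (a + b)) c"
    by (rule hfun_attained)
  then show ?thesis
    using inner_le_hfun[of c a] inner_le_hfun[of c b] by (simp add: blinfun.add_right inner_add_left)
qed

lemma hfun_scaleR:
  assumes "t \<ge> 0"
  shows "hfun J C x (t *\<^sub>R a) = t * hfun J C x a"
proof (rule antisym)
  obtain c where "c \<in> C" "hfun J C x (t *\<^sub>R a) = inner (J x (t *\<^sub>R a)) c"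
    by (rule hfun_attained)
  then show "hfun J C x (t *\<^sub>R a) \<le> t * hfun J C x a"
    using inner_le_hfun[of c a] assms by (simp add: blinfun.scaleR_right mult_left_mono)
  obtain c' where "c' \<in> C" "hfun J C x a = inner (J x a) c'"
    by (rule hfun_attained)
  then show "t * hfun J C x a \<le> hfun J C x (t *\<^sub>R a)"
    using inner_le_hfun[of c' "t *\<^sub>R a"] by (simp add: blinfun.scaleR_right)
qed

lemma hfun_zero: "hfun J C x 0 = 0"
  using hfun_scaleR[of 0 0] by simp

lemma abs_hfun_le: "\<bar>hfun J C x a\<bar> \<le> norm (J x) * (\<Sum>c\<in>C. norm c) * norm a"
proof -
  obtain c where c: "c \<in> C" "hfun J C x a = inner (J x a) c"
    by (rule hfun_attained)
  have "\<bar>inner (J x a) c\<bar> \<le> norm (J x a) * norm c"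
    by (rule Cauchy_Schwarz_ineq2)
  also have "\<dots> \<le> (norm (J x) * norm a) * (\<Sum>c\<in>C. norm c)"
    using C_fin c(1) by (intro mult_mono norm_blinfun member_le_sum) auto
  finally show ?thesis
    using c(2) by (simp add: algebra_simps)
qed

lemma convex_on_hfun: "convex_on UNIV (hfun J C x)"
proof (rule convex_onI)
  fix u :: real and a b
  assume "0 < u" "u < 1"
  then show "hfun J C x ((1 - u) *\<^sub>R a + u *\<^sub>R b) \<le> (1 - u) * hfun J C x a + u * hfun J C x b"
    using hfun_add_le[of "(1 - u) *\<^sub>R a" "u *\<^sub>R b"] by (simp add: hfun_scaleR)
qed auto

lemma continuous_on_hfun: "continuous_on UNIV (hfun J C x)"
  by (rule convex_on_continuous[OF open_UNIV convex_on_hfun])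

lemma vfun_objective_has_minimiser: "\<exists>d. \<forall>d'. vfun_objective J C x d \<le> vfun_objective J C x d'"
proof -
  let ?\<phi> = "vfun_objective J C x"
  define B where "B = norm (J x) * (\<Sum>c\<in>C. norm c)"
  have "B \<ge> 0"
    by (simp add: B_def sum_nonneg)
  \<comment> \<open>outside this ball the objective is positive, since h(x,d) \<ge> - B \<parallel>d\<parallel>\<close>
  define R where "R = 2 * B + 1"
  have "continuous_on (cball 0 R) ?\<phi>"
    unfolding vfun_objective_def
    by (intro continuous_intros continuous_on_subset[OF continuous_on_hfun]) auto
  moreover have "cball 0 R \<noteq> {}"
    using \<open>B \<ge> 0\<close> by (simp add: R_def)
  ultimately obtain d where d: "d \<in> cball 0 R" "\<And>y. y \<in> cball 0 R \<Longrightarrow> ?\<phi> d \<le> ?\<phi> y"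
    using continuous_attains_inf[OF compact_cball] by blast
  have "?\<phi> d \<le> ?\<phi> d'" for d'
  proof (cases "d' \<in> cball 0 R")
    case False
    then have "B * 2 \<le> norm d'"
      by (simp add: R_def)
    then have "B * 2 * norm d' \<le> norm d' * norm d'"
      by (intro mult_right_mono) auto
    moreover have "- B * norm d' \<le> hfun J C x d'"
      using abs_hfun_le[of d'] unfolding B_def by (simp add: abs_le_iff)
    ultimately have "0 \<le> ?\<phi> d'"
      unfolding vfun_objective_def power2_eq_square by linarith
    moreover have "?\<phi> d \<le> ?\<phi> 0"
      using d(2) \<open>B \<ge> 0\<close> by (simp add: R_def)
    ultimately show ?thesis
      by (simp add: vfun_objective_def hfun_zero)
  qed (use d in blast)
  then show ?thesis by blast
qed

lemma vfun_objective_minimiser_unique: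
  assumes a: "\<forall>d'. vfun_objective J C x a \<le> vfun_objective J C x d'"
    and b: "\<forall>d'. vfun_objective J C x b \<le> vfun_objective J C x d'"
  shows "a = b"
proof (rule ccontr)
  assume "a \<noteq> b"
  \<comment> \<open>h is convex and the squared norm is strictly convex, so the midpoint would be strictly better\<close>
  define m where "m = (1/2) *\<^sub>R a + (1/2) *\<^sub>R b"
  have "2 * hfun J C x m \<le> hfun J C x a + hfun J C x b"
    using hfun_add_le[of "(1/2) *\<^sub>R a" "(1/2) *\<^sub>R b"] by (simp add: m_def hfun_scaleR)
  moreover have "2 * (norm m)\<^sup>2 = (norm a)\<^sup>2 + (norm b)\<^sup>2 - (norm (a - b))\<^sup>2 / 2"
    unfolding m_def power2_norm_eq_inner
    by (simp add: inner_simps inner_commute[of b a] field_simps)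
  moreover have "(norm (a - b))\<^sup>2 > 0"
    using \<open>a \<noteq> b\<close> by simp
  ultimately have "2 * vfun_objective J C x m < vfun_objective J C x a + vfun_objective J C x b"
    unfolding vfun_objective_def by argo
  moreover have "vfun_objective J C x a \<le> vfun_objective J C x m" "vfun_objective J C x b \<le> vfun_objective J C x m"
    using a b by auto
  ultimately show False by linarith
qed

lemma vfun_minimises: "vfun_objective J C x (vfun J C x) \<le> vfun_objective J C x d"
proof -
  have "\<exists>!d. \<forall>d'. vfun_objective J C x d \<le> vfun_objective J C x d'"
    using vfun_objective_has_minimiser vfun_objective_minimiser_unique by blast
  then have "\<forall>d'. vfun_objective J C x (THE d. \<forall>d'. vfun_objective J C x d \<le> vfun_objective J C x d') \<le> vfun_objective J C x d'"
    by (rule theI')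
  then show ?thesis
    by (simp add: vfun_def vfun_objective_def)
qed

lemma hfun_vfun: "hfun J C x (vfun J C x) = - (norm (vfun J C x))\<^sup>2"
proof -
  define h where "h = hfun J C x (vfun J C x)"
  define N where "N = (norm (vfun J C x))\<^sup>2"
  \<comment> \<open>optimality along the ray through v(x): the map t \<mapsto> t h + t^2 N/2 is minimal at t = 1\<close>
  have ray: "h + N / 2 \<le> t * h + t\<^sup>2 * N / 2" if "t \<ge> 0" for t
    using vfun_minimises[of "t *\<^sub>R vfun J C x"] that
    by (simp add: vfun_objective_def h_def N_def hfun_scaleR power_mult_distrib)
  show ?thesis
  proof (cases "N = 0")
    case True
    then show ?thesis
      by (simp add: N_def hfun_zero)
  next
    case False
    then have "N > 0"
      by (simp add: N_def)
    moreover have "h \<le> - N / 2"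
      using ray[of 0] by simp
    ultimately have "- h / N \<ge> 0"
      by (simp add: divide_nonpos_pos)
    from ray[OF this] \<open>N > 0\<close> have "h + N / 2 \<le> - (h * h) / (2 * N)"
      by (simp add: power2_eq_square)
    then have "2 * N * (h + N / 2) \<le> 2 * N * (- (h * h) / (2 * N))"
      using \<open>N > 0\<close> by (intro mult_left_mono) auto
    then have "(h + N)\<^sup>2 \<le> 0"
      using \<open>N > 0\<close> by (simp add: power2_eq_square algebra_simps)
    then show ?thesis
      by (simp add: h_def N_def)
  qed
qed

end

lemma inner_increment_le:
  fixes F :: "'a::euclidean_space \<Rightarrow> 'b::euclidean_space" and J :: "'a \<Rightarrow> 'a \<Rightarrow>\<^sub>L 'b"
  assumes F_deriv: "\<And>y. (F has_derivative J y) (at y)"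
    and lip: "\<forall>y\<in>\<Lambda>. \<forall>z\<in>\<Lambda>. norm (J y - J z) \<le> L * norm (y - z)" and "L \<ge> 0"
    and "s > 0" and seg: "\<And>r. 0 \<le> r \<Longrightarrow> r < s \<Longrightarrow> x + r *\<^sub>R d \<in> \<Lambda>"
  shows "inner c (F (x + s *\<^sub>R d)) - inner c (F x) \<le> s * inner (J x d) c + norm c * L * s\<^sup>2 * (norm d)\<^sup>2"
proof -
  define f where "f r = inner c (F (x + r *\<^sub>R d))" for r
  define f' where "f' r = inner c (J (x + r *\<^sub>R d) d)" for r
  have "(f has_real_derivative f' r) (at r)" for r
  proof -
    have "((\<lambda>r. x + r *\<^sub>R d) has_derivative (\<lambda>q. q *\<^sub>R d)) (at r)"
      by (auto intro!: derivative_eq_intros)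
    from has_derivative_compose[OF this F_deriv]
    have "(f has_derivative (\<lambda>q. inner c (J (x + r *\<^sub>R d) (q *\<^sub>R d)))) (at r)"
      unfolding f_def by (rule has_derivative_inner_right)
    then show ?thesis
      by (rule has_derivative_imp_has_field_derivative) (simp add: f'_def blinfun.scaleR_right)
  qed
  then obtain z where z: "0 < z" "z < s" "f s - f 0 = s * f' z"
    using MVT2[OF \<open>s > 0\<close>, of f f'] by auto
  have "x \<in> \<Lambda>" "x + z *\<^sub>R d \<in> \<Lambda>"
    using seg[of 0] seg[of z] z \<open>s > 0\<close> by auto
  then have "norm (J (x + z *\<^sub>R d) - J x) \<le> L * (z * norm d)"
    using lip z(1) by force
  also have "\<dots> \<le> L * (s * norm d)"
    using z(2) \<open>L \<ge> 0\<close> by (intro mult_left_mono mult_right_mono) auto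
  finally have "norm (J (x + z *\<^sub>R d) - J x) \<le> L * s * norm d"
    by simp
  have "f' z - inner c (J x d) = inner c ((J (x + z *\<^sub>R d) - J x) d)"
    by (simp add: f'_def blinfun.diff_left inner_diff_right)
  also have "\<dots> \<le> norm c * (norm (J (x + z *\<^sub>R d) - J x) * norm d)"
    by (intro order.trans[OF norm_cauchy_schwarz] mult_left_mono norm_blinfun) auto
  also have "\<dots> \<le> norm c * (L * s * norm d * norm d)"
    using \<open>norm (J (x + z *\<^sub>R d) - J x) \<le> L * s * norm d\<close> by (intro mult_left_mono mult_right_mono) auto
  finally have "s * f' z \<le> s * (inner c (J x d) + norm c * L * s * (norm d)\<^sup>2)"
    using \<open>s > 0\<close> by (intro mult_left_mono) (auto simp: power2_eq_square algebra_simps)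
  with z(3) show ?thesis
    by (simp add: f_def power2_eq_square algebra_simps inner_commute)
qed

lemma segment_first_exit:
  fixes x d :: "'a::real_normed_vector"
  assumes "open \<Lambda>" "x \<in> \<Lambda>" "0 \<le> r" "x + r *\<^sub>R d \<notin> \<Lambda>"
  obtains s where "0 < s" "s \<le> r" "x + s *\<^sub>R d \<notin> \<Lambda>" "\<And>q. 0 \<le> q \<Longrightarrow> q < s \<Longrightarrow> x + q *\<^sub>R d \<in> \<Lambda>"
proof -
  define U where "U = {0..r} \<inter> (\<lambda>q. x + q *\<^sub>R d) -` (- \<Lambda>)"
  have "r \<in> U" "bdd_below U"
    using assms(3,4) by (auto simp: U_def bdd_below_def)
  moreover have "closed U"
    unfolding U_def using assms(1)
    by (intro closed_Int closed_atLeastAtMost continuous_closed_vimage) (auto intro!: continuous_intros)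
  ultimately have "Inf U \<in> U"
    using closed_contains_Inf by blast
  moreover have "Inf U \<le> q" if "q \<in> U" for q
    using cInf_lower[OF that \<open>bdd_below U\<close>] .
  moreover have "Inf U \<noteq> 0"
    using \<open>Inf U \<in> U\<close> assms(2) by (auto simp: U_def)
  ultimately show thesis
    using that[of "Inf U"] \<open>r \<in> U\<close> by (force simp: U_def)
qed

lemma armijo_failure_first_increase:
  fixes F :: "'a::real_normed_vector \<Rightarrow> 'b::real_inner"
  assumes "open \<Lambda>" and sublevel: "\<And>y. \<forall>c\<in>C. inner c (F y) \<le> inner c (F x) \<Longrightarrow> y \<in> \<Lambda>"
    and "0 \<le> \<rho>" "h \<le> 0" "\<forall>c\<in>C. inner c e \<le> 1" "t > 0"
    and fails: "\<exists>c\<in>C. inner c (F x) + \<rho> * t * h * inner c e < inner c (F (x + t *\<^sub>R d))"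
  obtains s c where "0 < s" "s \<le> t" "c \<in> C" "\<And>q. 0 \<le> q \<Longrightarrow> q < s \<Longrightarrow> x + q *\<^sub>R d \<in> \<Lambda>"
    and "\<rho> * s * h < inner c (F (x + s *\<^sub>R d)) - inner c (F x)"
proof (cases "\<forall>q. 0 \<le> q \<and> q < t \<longrightarrow> x + q *\<^sub>R d \<in> \<Lambda>")
  case True
  from fails obtain c where "c \<in> C" "inner c (F x) + \<rho> * t * h * inner c e < inner c (F (x + t *\<^sub>R d))"
    by blast
  moreover have "\<rho> * t * h \<le> 0"
    using assms(3,4,6) by (simp add: mult_nonneg_nonpos)
  then have "\<rho> * t * h \<le> \<rho> * t * h * inner c e"
    using assms(5) \<open>c \<in> C\<close> by (simp add: mult_le_cancel_left1)
  ultimately show thesis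
    using that[of t c] True \<open>t > 0\<close> by force
next
  \<comment> \<open>stop where the segment first leaves \<Lambda>: there F has increased in some direction c,
      since \<Lambda> contains the sublevel set\<close>
  case False
  then obtain q where "0 \<le> q" "x + q *\<^sub>R d \<notin> \<Lambda>" "q < t"
    by blast
  moreover have "x \<in> \<Lambda>"
    by (rule sublevel) simp
  ultimately obtain s where s: "0 < s" "s \<le> q" "x + s *\<^sub>R d \<notin> \<Lambda>" "\<And>q. 0 \<le> q \<Longrightarrow> q < s \<Longrightarrow> x + q *\<^sub>R d \<in> \<Lambda>"
    using segment_first_exit[OF \<open>open \<Lambda>\<close>] by metis
  then have "\<not> (\<forall>c\<in>C. inner c (F (x + s *\<^sub>R d)) \<le> inner c (F x))"
    using sublevel by blast
  then obtain c where "c \<in> C" "inner c (F x) < inner c (F (x + s *\<^sub>R d))"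
    by (auto simp: not_le)
  moreover have "\<rho> * s * h \<le> 0"
    using assms(3,4) \<open>s > 0\<close> by (simp add: mult_nonneg_nonpos)
  ultimately show thesis
    using that[of s c] s \<open>q < t\<close> by force
qed

lemma armijo_failure_step_bound:
  fixes F :: "'a::euclidean_space \<Rightarrow> 'b::euclidean_space" and J :: "'a \<Rightarrow> 'a \<Rightarrow>\<^sub>L 'b"
  assumes F_deriv: "\<And>y. (F has_derivative J y) (at y)"
    and lip: "\<forall>y\<in>\<Lambda>. \<forall>z\<in>\<Lambda>. norm (J y - J z) \<le> L * norm (y - z)" and "L \<ge> 0" and "open \<Lambda>"
    and "finite C" "C \<noteq> {}"
    and sublevel: "\<And>y. \<forall>c\<in>C. inner c (F y) \<le> inner c (F x) \<Longrightarrow> y \<in> \<Lambda>"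
    and "0 \<le> \<rho>" "hfun J C x d \<le> 0" "\<forall>c\<in>C. inner c e \<le> 1" "t > 0"
    and fails: "\<exists>c\<in>C. inner c (F x) + \<rho> * t * hfun J C x d * inner c e < inner c (F (x + t *\<^sub>R d))"
  shows "(1 - \<rho>) * (- hfun J C x d) \<le> L * (\<Sum>c\<in>C. norm c) * t * (norm d)\<^sup>2"
proof -
  let ?h = "hfun J C x d" and ?cm = "\<Sum>c\<in>C. norm c"
  obtain s c where "0 < s" "s \<le> t" "c \<in> C" and seg: "\<And>q. 0 \<le> q \<Longrightarrow> q < s \<Longrightarrow> x + q *\<^sub>R d \<in> \<Lambda>"
    and increase: "\<rho> * s * ?h < inner c (F (x + s *\<^sub>R d)) - inner c (F x)"
    using armijo_failure_first_increase[OF \<open>open \<Lambda>\<close> sublevel assms(8-11) fails] by blast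
  have "inner c (F (x + s *\<^sub>R d)) - inner c (F x) \<le> s * inner (J x d) c + norm c * L * s\<^sup>2 * (norm d)\<^sup>2"
    by (rule inner_increment_le[OF F_deriv lip \<open>L \<ge> 0\<close> \<open>0 < s\<close> seg])
  also have "\<dots> \<le> s * ?h + ?cm * L * s\<^sup>2 * (norm d)\<^sup>2"
    using inner_le_hfun[OF \<open>finite C\<close> \<open>C \<noteq> {}\<close> \<open>c \<in> C\<close>] member_le_sum[of c C norm] \<open>finite C\<close> \<open>c \<in> C\<close>
      \<open>0 < s\<close> \<open>L \<ge> 0\<close>
    by (intro add_mono mult_left_mono mult_right_mono) auto
  finally have "s * ((1 - \<rho>) * (- ?h)) < s * (L * ?cm * s * (norm d)\<^sup>2)"
    using increase by (simp add: algebra_simps power2_eq_square)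
  then have "(1 - \<rho>) * (- ?h) < L * ?cm * s * (norm d)\<^sup>2"
    using \<open>0 < s\<close> mult_less_cancel_left_pos by blast
  also have "\<dots> \<le> L * ?cm * t * (norm d)\<^sup>2"
    using \<open>s \<le> t\<close> \<open>L \<ge> 0\<close> by (intro mult_right_mono mult_left_mono) (auto simp: sum_nonneg)
  finally show ?thesis
    by simp
qed

lemma cg_beta_bounds:
  fixes P Q a b \<mu> \<beta> :: real
  assumes "0 < P" "0 < Q" "0 < \<mu>"
    and \<beta>: "\<beta> = P * (\<bar>a\<bar> + a) / max (\<mu> * \<bar>b * a\<bar>) (\<mu> * Q * \<bar>a\<bar>)"
  shows "0 \<le> \<beta>" "\<beta> * Q \<le> 2 / \<mu> * P" "\<beta> * \<bar>b\<bar> \<le> 2 / \<mu> * P"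
proof -
  consider "a \<le> 0" | "a > 0"
    by linarith
  then have "0 \<le> \<beta> \<and> \<beta> * Q \<le> 2 / \<mu> * P \<and> \<beta> * \<bar>b\<bar> \<le> 2 / \<mu> * P"
  proof cases
    case 1
    then show ?thesis
      using assms by simp
  next
    case 2
    define D where "D = max (\<mu> * \<bar>b\<bar> * a) (\<mu> * Q * a)"
    have "0 < D"
      using 2 assms by (simp add: D_def less_max_iff_disj)
    have \<beta>D: "\<beta> = 2 * P * a / D"
      using 2 by (simp add: \<beta> D_def abs_mult algebra_simps)
    have "\<mu> * Q * a / D \<le> 1" "\<mu> * \<bar>b\<bar> * a / D \<le> 1"
      using \<open>0 < D\<close> by (simp_all add: D_def)
    moreover have "\<beta> * Q = 2 / \<mu> * P * (\<mu> * Q * a / D)" "\<beta> * \<bar>b\<bar> = 2 / \<mu> * P * (\<mu> * \<bar>b\<bar> * a / D)"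
      using \<open>0 < \<mu>\<close> by (simp_all add: \<beta>D field_simps)
    moreover have "0 \<le> 2 / \<mu> * P" "0 \<le> \<beta>"
      using assms(1,3) 2 \<open>0 < D\<close> by (simp_all add: \<beta>D)
    ultimately show ?thesis
      by (metis mult_left_le)
  qed
  then show "0 \<le> \<beta>" "\<beta> * Q \<le> 2 / \<mu> * P" "\<beta> * \<bar>b\<bar> \<le> 2 / \<mu> * P"
    by auto
qed

lemma affine_recurrence_bounded:
  fixes w :: "nat \<Rightarrow> real"
  assumes "0 \<le> r" "r < 1" and rec: "\<And>k. k \<ge> N \<Longrightarrow> w (Suc k) \<le> a + r * w k" and "k \<ge> N"
  shows "w k \<le> max (w N) (a / (1 - r))"
  using \<open>k \<ge> N\<close>
proof (induction k rule: dec_induct)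
  case base
  show ?case by simp
next
  case (step k)
  let ?B = "max (w N) (a / (1 - r))"
  have "a = (1 - r) * (a / (1 - r))"
    using \<open>r < 1\<close> by simp
  also have "\<dots> \<le> (1 - r) * ?B"
    using \<open>r < 1\<close> by (intro mult_left_mono) auto
  finally have "a + r * ?B \<le> ?B"
    by (simp add: algebra_simps)
  moreover have "r * w k \<le> r * ?B"
    using step.IH \<open>0 \<le> r\<close> by (rule mult_left_mono)
  ultimately show ?case
    using rec[OF step.hyps(1)] by linarith
qed

lemma liminf_ereal_eq_0I:
  fixes f :: "nat \<Rightarrow> real"
  assumes "\<And>k. 0 \<le> f k" and small: "\<And>\<gamma>. \<gamma> > 0 \<Longrightarrow> frequently (\<lambda>k. f k \<le> \<gamma>) sequentially"
  shows "liminf (\<lambda>k. ereal (f k)) = 0"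
proof (rule antisym)
  show "0 \<le> liminf (\<lambda>k. ereal (f k))"
    using assms(1) by (intro Liminf_bounded) simp
  show "liminf (\<lambda>k. ereal (f k)) \<le> 0"
  proof (rule ccontr)
    assume "\<not> ?thesis"
    then obtain \<gamma> where "0 < ereal \<gamma>" "ereal \<gamma> < liminf (\<lambda>k. ereal (f k))"
      using ereal_dense2 by (metis not_le)
    then have "eventually (\<lambda>k. \<gamma> < f k) sequentially"
      using le_Liminf_iff[THEN iffD1, OF order_refl] by fastforce
    with small[of \<gamma>] \<open>0 < ereal \<gamma>\<close> show False
      by (simp add: frequently_def eventually_mono not_le)
  qed
qed

locale vector_cg =
  fixes F :: "'a::euclidean_space \<Rightarrow> 'b::euclidean_space"
    and J :: "'a \<Rightarrow> 'a \<Rightarrow>\<^sub>L 'b"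
    and K C :: "'b set"
    and \<rho> \<delta> \<mu> :: real and e :: 'b
    and x d :: "nat \<Rightarrow> 'a" and \<alpha> \<beta> \<tau> :: "nat \<Rightarrow> real"
    and \<Lambda> :: "'a set" and L :: real
  assumes K_cone: "convex_cone K" and K_closed: "closed K"
    and C_fin: "finite C" and C_0: "0 \<notin> C"
    and C_gen: "pos_polar K = cone hull (convex hull C)"
    and F_deriv: "\<And>y. (F has_derivative blinfun_apply (J y)) (at y)"
    and rho: "0 < \<rho>" "\<rho> < 1" and delta: "0 < \<delta>" and mu: "\<mu> > 2"
    and e_int: "e \<in> interior K" and e_C: "\<forall>w\<in>C. inner w e \<le> 1"
    and \<Lambda>_open: "open \<Lambda>" and sublevel_subset_\<Lambda>: "{y. cone_le K (F y) (F (x 0))} \<subseteq> \<Lambda>"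
    and lip: "\<forall>y\<in>\<Lambda>. \<forall>z\<in>\<Lambda>. norm (J y - J z) \<le> L * norm (y - z)" and L_pos: "L > 0"
    and A2: "\<forall>D :: nat \<Rightarrow> 'b. (\<forall>k. D k \<in> F ` {y. cone_le K (F y) (F (x 0))}) \<and>
              (\<forall>k. cone_le K (D (Suc k)) (D k)) \<longrightarrow> (\<exists>D0. \<forall>k. cone_le K D0 (D k))"
    and d0: "d 0 = vfun J C (x 0)"
    and dk: "\<forall>k\<ge>1. d k = vfun J C (x k) + \<beta> k *\<^sub>R d (k - 1)"
    and betak: "\<forall>k\<ge>1. \<beta> k =
        (- hfun J C (x k) (vfun J C (x k)) *
           (\<bar>hfun J C (x (k - 1)) (vfun J C (x k))\<bar> + hfun J C (x (k - 1)) (vfun J C (x k))))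
        / max (\<mu> * \<bar>hfun J C (x k) (d (k - 1)) * hfun J C (x (k - 1)) (vfun J C (x k))\<bar>)
              (- \<mu> * hfun J C (x (k - 1)) (vfun J C (x (k - 1))) *
                 \<bar>hfun J C (x (k - 1)) (vfun J C (x k))\<bar>)"
    and tauk: "\<forall>k. \<tau> k = - hfun J C (x k) (d k) / (norm (d k))\<^sup>2"
    and alphak: "\<forall>k. \<exists>j::nat. \<alpha> k = \<delta> ^ j * \<tau> k \<and>
        cone_le K (F (x k + \<alpha> k *\<^sub>R d k)) (F (x k) + (\<rho> * \<alpha> k * hfun J C (x k) (d k)) *\<^sub>R e) \<and>
        (\<forall>i<j. \<not> cone_le K (F (x k + (\<delta> ^ i * \<tau> k) *\<^sub>R d k))
                    (F (x k) + (\<rho> * (\<delta> ^ i * \<tau> k) * hfun J C (x k) (d k)) *\<^sub>R e))"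
    and xk: "\<forall>k. x (Suc k) = x k + \<alpha> k *\<^sub>R d k"
    and infinite_seq: "\<forall>k. vfun J C (x k) \<noteq> 0"
begin

abbreviation v :: "nat \<Rightarrow> 'a" where
  "v k \<equiv> vfun J C (x k)"

abbreviation slope :: "nat \<Rightarrow> real" where
  "slope k \<equiv> hfun J C (x k) (d k)"

lemma cone_le_iff: "cone_le K u w \<longleftrightarrow> (\<forall>c\<in>C. inner c u \<le> inner c w)"
  by (rule cone_le_iff_inner_le[OF K_cone K_closed C_gen])

lemma C_subset_pos_polar: "C \<subseteq> pos_polar K"
  using C_gen by (metis hull_subset subset_trans)

lemma C_ne: "C \<noteq> {}"
proof
  assume "C = {}"
  then have "pos_polar K = {}"
    using C_gen by (simp add: cone_hull_empty)
  moreover have "0 \<in> pos_polar K"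
    by (simp add: pos_polar_def)
  ultimately show False
    by simp
qed

lemma inner_e_pos: "c \<in> C \<Longrightarrow> 0 < inner c e"
  using pos_polar_inner_pos_interior C_subset_pos_polar C_0 e_int by blast

lemma hfun_v: "hfun J C (x k) (v k) = - (norm (v k))\<^sup>2"
  by (rule hfun_vfun[OF C_fin C_ne])

lemma beta_bounds:
  assumes "k \<ge> 1"
  shows "0 \<le> \<beta> k" "\<beta> k * (norm (v (k - 1)))\<^sup>2 \<le> 2 / \<mu> * (norm (v k))\<^sup>2"
    and "\<beta> k * \<bar>hfun J C (x k) (d (k - 1))\<bar> \<le> 2 / \<mu> * (norm (v k))\<^sup>2"
proof -
  have "\<beta> k = (norm (v k))\<^sup>2 * (\<bar>hfun J C (x (k - 1)) (v k)\<bar> + hfun J C (x (k - 1)) (v k))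
      / max (\<mu> * \<bar>hfun J C (x k) (d (k - 1)) * hfun J C (x (k - 1)) (v k)\<bar>)
            (\<mu> * (norm (v (k - 1)))\<^sup>2 * \<bar>hfun J C (x (k - 1)) (v k)\<bar>)"
    using betak assms by (simp add: hfun_v)
  from cg_beta_bounds[OF _ _ _ this] infinite_seq mu
  show "0 \<le> \<beta> k" "\<beta> k * (norm (v (k - 1)))\<^sup>2 \<le> 2 / \<mu> * (norm (v k))\<^sup>2"
    and "\<beta> k * \<bar>hfun J C (x k) (d (k - 1))\<bar> \<le> 2 / \<mu> * (norm (v k))\<^sup>2"
    by auto
qed

lemma slope_le: "slope k \<le> - (1 - 2 / \<mu>) * (norm (v k))\<^sup>2"
proof (cases "k = 0")
  case True
  have "0 \<le> 2 / \<mu> * (norm (v k))\<^sup>2"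
    using mu by simp
  with True show ?thesis
    using d0 by (simp add: hfun_v algebra_simps)
next
  case False
  then have "k \<ge> 1" by simp
  have "slope k \<le> hfun J C (x k) (v k) + hfun J C (x k) (\<beta> k *\<^sub>R d (k - 1))"
    using dk \<open>k \<ge> 1\<close> hfun_add_le[OF C_fin C_ne] by simp
  also have "\<dots> = - (norm (v k))\<^sup>2 + \<beta> k * hfun J C (x k) (d (k - 1))"
    using beta_bounds(1)[OF \<open>k \<ge> 1\<close>] by (simp add: hfun_v hfun_scaleR[OF C_fin C_ne])
  also have "\<dots> \<le> - (norm (v k))\<^sup>2 + \<beta> k * \<bar>hfun J C (x k) (d (k - 1))\<bar>"
    using beta_bounds(1)[OF \<open>k \<ge> 1\<close>] by (simp add: mult_left_mono)
  also have "\<dots> \<le> - (norm (v k))\<^sup>2 + 2 / \<mu> * (norm (v k))\<^sup>2"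
    using beta_bounds(3)[OF \<open>k \<ge> 1\<close>] by simp
  finally show ?thesis
    by (simp add: algebra_simps)
qed

lemma slope_neg: "slope k < 0"
proof -
  have "0 < (1 - 2 / \<mu>) * (norm (v k))\<^sup>2"
    using mu infinite_seq by simp
  then show ?thesis
    using slope_le[of k] by linarith
qed

lemma d_nonzero: "d k \<noteq> 0"
  using slope_neg[of k] by (auto simp: hfun_zero[OF C_fin C_ne])

lemma tau_pos: "0 < \<tau> k"
  using tauk slope_neg[of k] d_nonzero[of k] by (simp add: divide_neg_pos)

lemma armijo_step:
  obtains j where "\<alpha> k = \<delta> ^ j * \<tau> k"
    and "\<And>c. c \<in> C \<Longrightarrow> inner c (F (x (Suc k))) \<le> inner c (F (x k)) + \<rho> * \<alpha> k * slope k * inner c e"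
    and "\<And>i. i < j \<Longrightarrow> \<exists>c\<in>C. inner c (F (x k)) + \<rho> * (\<delta> ^ i * \<tau> k) * slope k * inner c e
                              < inner c (F (x k + (\<delta> ^ i * \<tau> k) *\<^sub>R d k))"
proof -
  obtain j where "\<alpha> k = \<delta> ^ j * \<tau> k"
    and "cone_le K (F (x k + \<alpha> k *\<^sub>R d k)) (F (x k) + (\<rho> * \<alpha> k * slope k) *\<^sub>R e)"
    and "\<forall>i<j. \<not> cone_le K (F (x k + (\<delta> ^ i * \<tau> k) *\<^sub>R d k))
                    (F (x k) + (\<rho> * (\<delta> ^ i * \<tau> k) * slope k) *\<^sub>R e)"
    using alphak by blast
  then show thesis
    by (intro that[of j]) (auto simp: xk cone_le_iff inner_add_right not_le)
qed

lemma alpha_pos: "0 < \<alpha> k"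
proof -
  obtain j where "\<alpha> k = \<delta> ^ j * \<tau> k"
    by (rule armijo_step)
  then show ?thesis
    using tau_pos[of k] delta by simp
qed

lemma F_descent:
  assumes "c \<in> C"
  shows "inner c (F (x (Suc k))) + \<rho> * inner c e * (\<alpha> k * - slope k) \<le> inner c (F (x k))"
proof -
  have "inner c (F (x (Suc k))) \<le> inner c (F (x k)) + \<rho> * \<alpha> k * slope k * inner c e"
    using armijo_step assms by metis
  then show ?thesis
    by (simp add: algebra_simps)
qed

lemma F_Suc_le: "c \<in> C \<Longrightarrow> inner c (F (x (Suc k))) \<le> inner c (F (x k))"
proof -
  assume "c \<in> C"
  then have "0 \<le> \<rho> * inner c e * (\<alpha> k * - slope k)"
    using rho inner_e_pos[of c] alpha_pos[of k] slope_neg[of k] by (intro mult_nonneg_nonneg) auto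
  with F_descent[OF \<open>c \<in> C\<close>, of k] show ?thesis
    by linarith
qed

lemma F_le_F0: "c \<in> C \<Longrightarrow> inner c (F (x k)) \<le> inner c (F (x 0))"
  by (induction k) (auto intro: order_trans[OF F_Suc_le])

lemma mem_\<Lambda>_if_F_le_iterate:
  assumes "\<forall>c\<in>C. inner c (F y) \<le> inner c (F (x k))"
  shows "y \<in> \<Lambda>"
proof -
  have "cone_le K (F y) (F (x 0))"
    using assms F_le_F0 by (meson cone_le_iff order_trans)
  then show ?thesis
    using sublevel_subset_\<Lambda> by blast
qed

lemma summable_descent: "summable (\<lambda>k. \<alpha> k * - slope k)"
proof -
  obtain c where "c \<in> C"
    using C_ne by blast
  have "\<forall>k. F (x k) \<in> F ` {y. cone_le K (F y) (F (x 0))}"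
    by (auto simp: cone_le_iff F_le_F0)
  then have "\<exists>D0. \<forall>k. cone_le K D0 (F (x k))"
    using F_Suc_le by (intro A2[rule_format] conjI) (auto simp: cone_le_iff)
  then obtain D0 where D0: "\<And>k. inner c D0 \<le> inner c (F (x k))"
    using \<open>c \<in> C\<close> by (auto simp: cone_le_iff)
  define B where "B = (inner c (F (x 0)) - inner c D0) / (\<rho> * inner c e)"
  have nonneg: "0 \<le> \<alpha> k * - slope k" for k
    using alpha_pos[of k] slope_neg[of k] by (intro mult_nonneg_nonneg) auto
  have partial_sums: "(\<Sum>k<n. \<alpha> k * - slope k) \<le> B" for n
  proof -
    have "\<rho> * inner c e * (\<Sum>k<n. \<alpha> k * - slope k) = (\<Sum>k<n. \<rho> * inner c e * (\<alpha> k * - slope k))"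
      by (simp add: sum_distrib_left)
    also have "\<dots> \<le> (\<Sum>k<n. inner c (F (x k)) - inner c (F (x (Suc k))))"
      using F_descent[OF \<open>c \<in> C\<close>] by (intro sum_mono) (simp add: algebra_simps)
    also have "\<dots> = inner c (F (x 0)) - inner c (F (x n))"
      by (rule sum_lessThan_telescope')
    also have "\<dots> \<le> inner c (F (x 0)) - inner c D0"
      using D0 by simp
    finally show ?thesis
      using rho inner_e_pos[OF \<open>c \<in> C\<close>] by (simp add: B_def pos_le_divide_eq mult.commute)
  qed
  show ?thesis
  proof (rule bounded_imp_summable[OF nonneg])
    show "(\<Sum>k\<le>n. \<alpha> k * - slope k) \<le> B" for n
      using partial_sums[of "Suc n"] by (simp only: lessThan_Suc_atMost)
  qed
qed

lemma alpha_ge_if_backtracked: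
  assumes "\<alpha> k \<noteq> \<tau> k"
  shows "\<delta> * (1 - \<rho>) * - slope k / (L * (\<Sum>c\<in>C. norm c) * (norm (d k))\<^sup>2) \<le> \<alpha> k"
proof -
  let ?X = "L * (\<Sum>c\<in>C. norm c) * (norm (d k))\<^sup>2"
  obtain j where \<alpha>j: "\<alpha> k = \<delta> ^ j * \<tau> k"
    and fails: "\<And>i. i < j \<Longrightarrow> \<exists>c\<in>C. inner c (F (x k)) + \<rho> * (\<delta> ^ i * \<tau> k) * slope k * inner c e
                              < inner c (F (x k + (\<delta> ^ i * \<tau> k) *\<^sub>R d k))"
    by (rule armijo_step[of k]) blast
  have "j \<noteq> 0"
    using assms \<alpha>j by (cases j) auto
  then obtain i where "j = Suc i"
    using not0_implies_Suc by blast
  \<comment> \<open>the previous trial step t = \<alpha>_k / \<delta> failed the Armijo test, which forces t to be large\<close>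
  define t where "t = \<delta> ^ i * \<tau> k"
  have "t > 0"
    using delta tau_pos[of k] by (simp add: t_def)
  have "(1 - \<rho>) * - slope k \<le> L * (\<Sum>c\<in>C. norm c) * t * (norm (d k))\<^sup>2"
  proof (rule armijo_failure_step_bound[OF F_deriv lip _ \<Lambda>_open C_fin C_ne mem_\<Lambda>_if_F_le_iterate])
    show "\<exists>c\<in>C. inner c (F (x k)) + \<rho> * t * slope k * inner c e < inner c (F (x k + t *\<^sub>R d k))"
      using fails[of i] \<open>j = Suc i\<close> by (simp add: t_def)
  qed (use L_pos rho slope_neg[of k] e_C \<open>t > 0\<close> in auto)
  then have "(1 - \<rho>) * - slope k \<le> t * ?X"
    by (simp only: ac_simps)
  moreover have "0 < (\<Sum>c\<in>C. norm c)"
    using C_fin C_ne C_0 by (auto intro!: sum_pos2)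
  then have "0 < ?X"
    using L_pos d_nonzero[of k] by simp
  ultimately have "(1 - \<rho>) * - slope k / ?X \<le> t"
    by (subst pos_divide_le_eq)
  then have "\<delta> * ((1 - \<rho>) * - slope k / ?X) \<le> \<delta> * t"
    using delta by (intro mult_left_mono) auto
  moreover have "\<alpha> k = \<delta> * t"
    using \<alpha>j \<open>j = Suc i\<close> by (simp add: t_def)
  ultimately show ?thesis
    by (simp only: times_divide_eq_right mult.assoc)
qed

lemma step_lower_bound:
  obtains \<kappa> where "\<kappa> > 0" "\<And>k. \<kappa> * ((slope k)\<^sup>2 / (norm (d k))\<^sup>2) \<le> \<alpha> k * - slope k"
proof -
  define cm where "cm = (\<Sum>c\<in>C. norm c)"
  have "cm > 0"
    using C_fin C_ne C_0 by (auto simp: cm_def intro!: sum_pos2)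
  define \<kappa> where "\<kappa> = min 1 (\<delta> * (1 - \<rho>) / (L * cm))"
  have "\<kappa> > 0"
    using delta rho L_pos \<open>cm > 0\<close> by (simp add: \<kappa>_def)
  moreover have "\<kappa> * ((slope k)\<^sup>2 / (norm (d k))\<^sup>2) \<le> \<alpha> k * - slope k" for k
  proof -
    define \<sigma> where "\<sigma> = - slope k"
    define g where "g = \<sigma>\<^sup>2 / (norm (d k))\<^sup>2"
    have "\<sigma> > 0" "g \<ge> 0"
      using slope_neg[of k] by (simp_all add: \<sigma>_def g_def)
    have "\<kappa> * g \<le> \<alpha> k * \<sigma>"
    proof (cases "\<alpha> k = \<tau> k")
      case True
      then have "\<alpha> k * \<sigma> = g"
        using tauk by (simp add: \<sigma>_def g_def power2_eq_square)
      moreover have "\<kappa> * g \<le> 1 * g"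
        using \<open>g \<ge> 0\<close> by (intro mult_right_mono) (auto simp: \<kappa>_def)
      ultimately show ?thesis
        by simp
    next
      case False
      have "\<kappa> * g \<le> \<delta> * (1 - \<rho>) / (L * cm) * g"
        using \<open>g \<ge> 0\<close> by (intro mult_right_mono) (auto simp: \<kappa>_def)
      also have "\<dots> = \<delta> * (1 - \<rho>) * \<sigma> / (L * cm * (norm (d k))\<^sup>2) * \<sigma>"
        by (simp add: g_def power2_eq_square)
      also have "\<dots> \<le> \<alpha> k * \<sigma>"
        using alpha_ge_if_backtracked[OF False] \<open>\<sigma> > 0\<close> by (intro mult_right_mono) (auto simp: \<sigma>_def cm_def)
      finally show ?thesis .
    qed
    then show ?thesis
      by (simp add: \<sigma>_def g_def power2_eq_square)
  qed
  ultimately show thesis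
    by (rule that)
qed

lemma slope_ratio_tendsto_0: "(\<lambda>k. (slope k)\<^sup>2 / (norm (d k))\<^sup>2) \<longlonglongrightarrow> 0"
proof -
  obtain \<kappa> where "\<kappa> > 0" and \<kappa>: "\<And>k. \<kappa> * ((slope k)\<^sup>2 / (norm (d k))\<^sup>2) \<le> \<alpha> k * - slope k"
    using step_lower_bound by blast
  have "summable (\<lambda>k. \<alpha> k * - slope k / \<kappa>)"
    by (rule summable_divide[OF summable_descent])
  moreover have "norm ((slope k)\<^sup>2 / (norm (d k))\<^sup>2) \<le> \<alpha> k * - slope k / \<kappa>" for k
  proof -
    have "norm ((slope k)\<^sup>2 / (norm (d k))\<^sup>2) = \<kappa> * ((slope k)\<^sup>2 / (norm (d k))\<^sup>2) / \<kappa>"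
      using \<open>\<kappa> > 0\<close> by simp
    also have "\<dots> \<le> \<alpha> k * - slope k / \<kappa>"
      using \<kappa>[of k] \<open>\<kappa> > 0\<close> by (intro divide_right_mono) auto
    finally show ?thesis .
  qed
  ultimately have "summable (\<lambda>k. (slope k)\<^sup>2 / (norm (d k))\<^sup>2)"
    by (rule summable_comparison_test')
  then show ?thesis
    by (rule summable_LIMSEQ_zero)
qed

abbreviation d_ratio :: "nat \<Rightarrow> real" where
  "d_ratio k \<equiv> norm (d k) / (norm (v k))\<^sup>2"

lemma d_ratio_Suc_le: "d_ratio (Suc k) \<le> 1 / norm (v (Suc k)) + 2 / \<mu> * d_ratio k"
proof -
  have "d (Suc k) = v (Suc k) + \<beta> (Suc k) *\<^sub>R d k"
    using dk by simp
  then have "norm (d (Suc k)) \<le> norm (v (Suc k)) + norm (\<beta> (Suc k) *\<^sub>R d k)"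
    by (metis norm_triangle_ineq)
  also have "norm (\<beta> (Suc k) *\<^sub>R d k) = \<beta> (Suc k) * norm (d k)"
    using beta_bounds(1)[of "Suc k"] by simp
  also have "\<beta> (Suc k) * norm (d k) = \<beta> (Suc k) * (norm (v k))\<^sup>2 * d_ratio k"
    using infinite_seq by simp
  also have "\<dots> \<le> 2 / \<mu> * (norm (v (Suc k)))\<^sup>2 * d_ratio k"
    using beta_bounds(2)[of "Suc k"] by (intro mult_right_mono) auto
  finally have "d_ratio (Suc k)
      \<le> (norm (v (Suc k)) + 2 / \<mu> * (norm (v (Suc k)))\<^sup>2 * d_ratio k) / (norm (v (Suc k)))\<^sup>2"
    by (simp add: divide_right_mono)
  also have "\<dots> = 1 / norm (v (Suc k)) + 2 / \<mu> * d_ratio k"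
    using infinite_seq by (simp add: add_divide_distrib power2_eq_square)
  finally show ?thesis .
qed

lemma slope_ratio_ge: "(1 - 2 / \<mu>)\<^sup>2 / (d_ratio k)\<^sup>2 \<le> (slope k)\<^sup>2 / (norm (d k))\<^sup>2"
proof -
  define a where "a = (1 - 2 / \<mu>) * (norm (v k))\<^sup>2"
  have "0 \<le> a"
    using mu by (simp add: a_def)
  have "a\<^sup>2 \<le> (- slope k)\<^sup>2"
    using slope_le[of k] \<open>0 \<le> a\<close> by (intro power_mono) (simp_all add: a_def algebra_simps)
  have "(1 - 2 / \<mu>)\<^sup>2 / (d_ratio k)\<^sup>2 = a\<^sup>2 / (norm (d k))\<^sup>2"
    using infinite_seq by (simp add: a_def power_divide power_mult_distrib)
  also have "\<dots> \<le> (slope k)\<^sup>2 / (norm (d k))\<^sup>2"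
    using \<open>a\<^sup>2 \<le> (- slope k)\<^sup>2\<close> by (simp add: divide_right_mono)
  finally show ?thesis .
qed

lemma d_ratio_bounded:
  assumes "\<gamma> > 0" and N: "\<And>k. k \<ge> N \<Longrightarrow> \<gamma> < norm (v k)"
  obtains B where "B > 0" "\<And>k. k \<ge> N \<Longrightarrow> d_ratio k \<le> B"
proof
  define B where "B = max (d_ratio N) (1 / \<gamma> / (1 - 2 / \<mu>))"
  show "B > 0"
    using d_nonzero[of N] infinite_seq by (simp add: B_def less_max_iff_disj)
  \<comment> \<open>once \<parallel>v_k\<parallel> stays above \<gamma>, the recurrence for d_ratio is a contraction plus a bounded term\<close>
  show "d_ratio k \<le> B" if "k \<ge> N" for k
    unfolding B_def
  proof (rule affine_recurrence_bounded[OF _ _ _ that])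
    show "d_ratio (Suc k) \<le> 1 / \<gamma> + 2 / \<mu> * d_ratio k" if "k \<ge> N" for k
    proof -
      have "1 / norm (v (Suc k)) \<le> 1 / \<gamma>"
        using N[of "Suc k"] \<open>k \<ge> N\<close> \<open>\<gamma> > 0\<close> by (simp add: frac_le)
      then show ?thesis
        using d_ratio_Suc_le[of k] by linarith
    qed
  qed (use mu in auto)
qed

lemma frequently_norm_v_le:
  assumes "\<gamma> > 0"
  shows "frequently (\<lambda>k. norm (v k) \<le> \<gamma>) sequentially"
proof (rule ccontr)
  assume "\<not> ?thesis"
  then obtain N where "\<And>k. k \<ge> N \<Longrightarrow> \<gamma> < norm (v k)"
    by (auto simp: not_frequently eventually_sequentially not_le)
  with \<open>\<gamma> > 0\<close> obtain B where "B > 0" and d_ratio_le: "\<And>k. k \<ge> N \<Longrightarrow> d_ratio k \<le> B"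
    using d_ratio_bounded by blast
  have "(1 - 2 / \<mu>)\<^sup>2 / B\<^sup>2 \<le> (slope k)\<^sup>2 / (norm (d k))\<^sup>2" if "k \<ge> N" for k
  proof -
    have "(d_ratio k)\<^sup>2 \<le> B\<^sup>2"
      using d_ratio_le[OF that] by (intro power_mono) auto
    moreover have "d_ratio k > 0"
      using d_nonzero[of k] infinite_seq by simp
    ultimately have "(1 - 2 / \<mu>)\<^sup>2 / B\<^sup>2 \<le> (1 - 2 / \<mu>)\<^sup>2 / (d_ratio k)\<^sup>2"
      using \<open>B > 0\<close> by (intro divide_left_mono) (auto intro!: mult_pos_pos)
    also have "\<dots> \<le> (slope k)\<^sup>2 / (norm (d k))\<^sup>2"
      by (rule slope_ratio_ge)
    finally show ?thesis .
  qed
  moreover have "(1 - 2 / \<mu>)\<^sup>2 / B\<^sup>2 > 0"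
    using mu \<open>B > 0\<close> by simp
  then obtain M where "\<And>k. k \<ge> M \<Longrightarrow> (slope k)\<^sup>2 / (norm (d k))\<^sup>2 < (1 - 2 / \<mu>)\<^sup>2 / B\<^sup>2"
    using order_tendstoD(2)[OF slope_ratio_tendsto_0] by (auto simp: eventually_sequentially)
  ultimately show False
    by (metis max.cobounded1 max.cobounded2 not_le)
qed

theorem liminf_norm_v: "liminf (\<lambda>k. ereal (norm (v k))) = 0"
  using frequently_norm_v_le by (intro liminf_ereal_eq_0I) auto

end

theorem mainTheorem4:
  fixes F :: "'a::euclidean_space \<Rightarrow> 'b::euclidean_space"
    and J :: "'a \<Rightarrow> 'a \<Rightarrow>\<^sub>L 'b"
    and K C :: "'b set"
    and \<rho> \<delta> \<mu> :: real and e :: 'b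
    and x d :: "nat \<Rightarrow> 'a" and \<alpha> \<beta> \<tau> :: "nat \<Rightarrow> real"
  assumes K_cone: "convex_cone K" and K_closed: "closed K" and K_pointed: "pointed K"
    and K_int: "interior K \<noteq> {}" and K_fg: "finitely_generated_cone K"
    and C_fin: "finite C" and C_0: "0 \<notin> C"
    and C_gen: "pos_polar K = cone hull (convex hull C)"
    and F_deriv: "\<And>y. (F has_derivative blinfun_apply (J y)) (at y)"
    and J_cont: "continuous_on UNIV J"
    and rho: "0 < \<rho>" "\<rho> < 1" and delta: "0 < \<delta>" "\<delta> < 1" and mu: "\<mu> > 2"
    and e_int: "e \<in> interior K" and e_C: "\<forall>w\<in>C. inner w e \<le> 1"
    and A1: "\<exists>\<Lambda> L. open \<Lambda> \<and> {y. cone_le K (F y) (F (x 0))} \<subseteq> \<Lambda> \<and>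
              (\<forall>y\<in>\<Lambda>. \<forall>z\<in>\<Lambda>. norm (J y - J z) \<le> L * norm (y - z))"
    and A2: "\<forall>D :: nat \<Rightarrow> 'b. (\<forall>k. D k \<in> F ` {y. cone_le K (F y) (F (x 0))}) \<and>
              (\<forall>k. cone_le K (D (Suc k)) (D k)) \<longrightarrow> (\<exists>D0. \<forall>k. cone_le K D0 (D k))"
    and d0: "d 0 = vfun J C (x 0)"
    and dk: "\<forall>k\<ge>1. d k = vfun J C (x k) + \<beta> k *\<^sub>R d (k - 1)"
    and betak: "\<forall>k\<ge>1. \<beta> k =
        (- hfun J C (x k) (vfun J C (x k)) *
           (\<bar>hfun J C (x (k - 1)) (vfun J C (x k))\<bar> + hfun J C (x (k - 1)) (vfun J C (x k))))
        / max (\<mu> * \<bar>hfun J C (x k) (d (k - 1)) * hfun J C (x (k - 1)) (vfun J C (x k))\<bar>)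
              (- \<mu> * hfun J C (x (k - 1)) (vfun J C (x (k - 1))) *
                 \<bar>hfun J C (x (k - 1)) (vfun J C (x k))\<bar>)"
    and tauk: "\<forall>k. \<tau> k = - hfun J C (x k) (d k) / (norm (d k))\<^sup>2"
    and alphak: "\<forall>k. \<exists>j::nat. \<alpha> k = \<delta> ^ j * \<tau> k \<and>
        cone_le K (F (x k + \<alpha> k *\<^sub>R d k)) (F (x k) + (\<rho> * \<alpha> k * hfun J C (x k) (d k)) *\<^sub>R e) \<and>
        (\<forall>i<j. \<not> cone_le K (F (x k + (\<delta> ^ i * \<tau> k) *\<^sub>R d k))
                    (F (x k) + (\<rho> * (\<delta> ^ i * \<tau> k) * hfun J C (x k) (d k)) *\<^sub>R e))"
    and xk: "\<forall>k. x (Suc k) = x k + \<alpha> k *\<^sub>R d k"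
    and infinite_seq: "\<forall>k. vfun J C (x k) \<noteq> 0"
  shows "liminf (\<lambda>k. ereal (norm (vfun J C (x k)))) = 0"
proof -
  obtain \<Lambda> L where \<Lambda>: "open \<Lambda>" "{y. cone_le K (F y) (F (x 0))} \<subseteq> \<Lambda>"
    and lip: "\<forall>y\<in>\<Lambda>. \<forall>z\<in>\<Lambda>. norm (J y - J z) \<le> L * norm (y - z)"
    using A1 by blast
  have "\<forall>y\<in>\<Lambda>. \<forall>z\<in>\<Lambda>. norm (J y - J z) \<le> max L 1 * norm (y - z)"
    using lip by (meson max.cobounded1 mult_right_mono norm_ge_zero order_trans)
  then interpret vector_cg F J K C \<rho> \<delta> \<mu> e x d \<alpha> \<beta> \<tau> \<Lambda> "max L 1"
    using assms \<Lambda> by unfold_locales auto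
  show ?thesis
    by (rule liminf_norm_v)
qed

end
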